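(* Assume the setting in the context. Let $U\in C^1([0,T];X)$ with $U(t)\in D(d)\cap D(d^\star)$ and $\partial_tU(t)=J(d+d^\star)U(t)$ for all $t\in[0,T]$, and let $\hat U_h^N\in\mathcal{H}_h$ satisfy $$\mathcal{L}_h\big((\mathrm{Id}-P_{\mathfrak{H}})\hat U_h^N,V_h\big)=\big((\mathrm{Id}-P_{\mathfrak{H}})I_h\mathcal{T}^NU,V_h\big)_h\ \ \forall V_h\in\mathcal{H}_h,\qquad P_{\mathfrak{H}}\hat U_h^N=I_hP_{\mathfrak{H}}U(t_N).$$ Let $C_L>0$ be a constant such that $\sup_{W_h\in\mathfrak{H}_h^{\perp_h},W_h\ne0}\mathcal{L}_h(V_h,W_h)/\|W_h\|_{1,h}\ge C_L\|V_h\|_{1,h}$ for all $V_h\in\mathfrak{H}_h^{\perp_h}$. Then $$\big\|(\mathrm{Id}-P_{\mathfrak{H}})\big(I_hU(T)-\hat U_h^N\big)\big\|_{1,h}\le\frac{1}{C_L}\Big(\|\epsilon_h(U(T),\cdot)\|_{1,h}^{\ast}+\|I_h\epsilon_{\Delta t,N}(U)\|_h\Big).$$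
   Context: Continuous setting: $\Omega\subset\mathbb{R}^3$ a domain, $X:=L^2(\Omega;\mathbb{R}^3)\oplus L^2(\Omega;\mathbb{T})\oplus L^2(\Omega;\mathbb{S})\oplus L^2(\Omega;\mathbb{R})$ ($\mathbb{T}$ trace-free, $\mathbb{S}$ symmetric $3\times3$ matrices) with $L^2$ inner product; $d(u_0,u_1,u_2,u_3)=(0,\operatorname{dev}\operatorname{grad}u_0,\operatorname{sym}\operatorname{curl}u_1,\operatorname{div}\operatorname{div}u_2)$ on its natural domain $D(d)$ (the components of the $L^2$ spaces whose image is in $L^2$), $d^\star$ its Hilbert adjoint; $J=\operatorname{diag}(1,-1,1,-1)$. $P_{\mathfrak{H}}$ is the orthogonal projection onto the continuous harmonic forms $\operatorname{Ker}d\cap\operatorname{Ker}d^\star$. Time grid $0=t_0<\dots<t_N=T$; $\mathcal{T}^N$ is a linear map sending sequences $(v^m)_{0\le m\le N}$ in $X$ to $X$, and $\mathcal{T}^NU:=\mathcal{T}^N((U(t_m))_m)$; $\epsilon_{\Delta t,N}(U):=\mathcal{T}^NU-\partial_tU(t_N)$. Discrete setting: finite-dimensional inner product spaces $(\mathcal{H}^i_h,(\cdot,\cdot)_h)$, $i=0,\dots,3$, with linear $d_h:\mathcal{H}^i_h\to\mathcal{H}^{i+1}_h$, $d_h\circ d_h=0$; $\mathcal{H}_h=\prod_i\mathcal{H}^i_h$ with $(V,W)_h=\sum_i(v_i,w_i)_h$, $d_h(v_0,\dots,v_3)=(0,d_hv_0,d_hv_1,d_hv_2)$, graph norm $\|V\|_{1,h}=\|V\|_h+\|d_hV\|_h$;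 $\mathcal{L}_h(V,W):=(Jd_hV,W)_h-(V,Jd_hW)_h$. Linear interpolators $I_h^i$ from (subspaces of) the $i$-th component of $X$ to $\mathcal{H}^i_h$, $I_h:=\operatorname{diag}(I_h^i)$, satisfying the cochain property $d_hI_h^i=I_h^{i+1}d$ ($0\le i<3$); all interpolants appearing are assumed defined. The discrete harmonic forms are $\mathfrak{H}_h=\operatorname{Ker}d_h\cap\operatorname{Ker}d_h^\ast$ ($d_h^\ast$ the $(\cdot,\cdot)_h$-adjoint), with orthogonal projector also denoted $P_{\mathfrak{H}}$ when acting on $\mathcal{H}_h$, and $\perp_h$ denotes orthogonal complement. For $V\in D(d^\star)$ and $W_h\in\mathcal{H}_h$, $\epsilon_h(V,W_h):=(I_hV,d_hW_h)_h-(I_hd^\star V,W_h)_h$, and $\|\ell\|_{1,h}^\ast:=\sup_{W_h\neq0}|\ell(W_h)|/\|W_h\|_{1,h}$ for a linear functional $\ell$ on $\mathcal{H}_h$. *)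

theory Defs
  imports "HOL-Analysis.Analysis"
begin

definition Jop :: "'a::ab_group_add \<times> 'b::ab_group_add \<times> 'c::ab_group_add \<times> 'd::ab_group_add
                   \<Rightarrow> 'a \<times> 'b \<times> 'c \<times> 'd" where
  "Jop = (\<lambda>(a, b, c, e). (a, - b, c, - e))"

definition dtot :: "('a \<Rightarrow> 'b) \<Rightarrow> ('b \<Rightarrow> 'c) \<Rightarrow> ('c \<Rightarrow> 'e)
                   \<Rightarrow> 'a \<times> 'b \<times> 'c \<times> 'e \<Rightarrow> 'a::zero \<times> 'b \<times> 'c \<times> 'e" where
  "dtot d0 d1 d2 = (\<lambda>(u0, u1, u2, u3). (0, d0 u0, d1 u1, d2 u2))"

definition diag4 :: "('a \<Rightarrow> 'a') \<Rightarrow> ('b \<Rightarrow> 'b') \<Rightarrow> ('c \<Rightarrow> 'c') \<Rightarrow> ('e \<Rightarrow> 'e')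
                   \<Rightarrow> 'a \<times> 'b \<times> 'c \<times> 'e \<Rightarrow> 'a' \<times> 'b' \<times> 'c' \<times> 'e'" where
  "diag4 f0 f1 f2 f3 = (\<lambda>(u0, u1, u2, u3). (f0 u0, f1 u1, f2 u2, f3 u3))"

definition lin_on :: "'a::real_vector set \<Rightarrow> ('a \<Rightarrow> 'b::real_vector) \<Rightarrow> bool" where
  "lin_on S f \<longleftrightarrow> subspace S \<and> (\<forall>x\<in>S. \<forall>y\<in>S. f (x + y) = f x + f y)
                  \<and> (\<forall>c. \<forall>x\<in>S. f (c *\<^sub>R x) = c *\<^sub>R f x)"

definition closed_op :: "'a::real_normed_vector set \<Rightarrow> ('a \<Rightarrow> 'b::real_normed_vector) \<Rightarrow> bool" where
  "closed_op D f \<longleftrightarrow> (\<forall>u x y. (\<forall>n. u n \<in> D) \<longrightarrow> u \<longlonglongrightarrow> x \<longrightarrow> (\<lambda>n. f (u n)) \<longlonglongrightarrow> y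
                         \<longrightarrow> x \<in> D \<and> f x = y)"

definition adj_dom :: "'a::real_inner set \<Rightarrow> ('a \<Rightarrow> 'b::real_inner) \<Rightarrow> 'b set" where
  "adj_dom D f = {v. \<exists>w. \<forall>u\<in>D. inner (f u) v = inner u w}"

definition adj :: "'a::real_inner set \<Rightarrow> ('a \<Rightarrow> 'b::real_inner) \<Rightarrow> 'b \<Rightarrow> 'a" where
  "adj D f v = (THE w. \<forall>u\<in>D. inner (f u) v = inner u w)"

text \<open>Orthogonal projection onto a set S (a closed subspace in all uses).\<close>
definition oproj :: "'a::real_inner set \<Rightarrow> 'a \<Rightarrow> 'a" where
  "oproj S x = (THE p. p \<in> S \<and> (\<forall>y\<in>S. inner (x - p) y = 0))"

definition ocompl :: "'a::real_inner set \<Rightarrow> 'a set" where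
  "ocompl S = {w. \<forall>y\<in>S. inner w y = 0}"

definition gnorm :: "('a::real_normed_vector \<Rightarrow> 'a) \<Rightarrow> 'a \<Rightarrow> real" where
  "gnorm dh V = norm V + norm (dh V)"

definition Lh :: "('a::real_inner \<times> 'b::real_inner \<times> 'c::real_inner \<times> 'e::real_inner
                   \<Rightarrow> 'a \<times> 'b \<times> 'c \<times> 'e) \<Rightarrow> _ \<Rightarrow> _ \<Rightarrow> real" where
  "Lh dh V W = inner (Jop (dh V)) W - inner V (Jop (dh W))"

definition dual_norm :: "('a::real_normed_vector \<Rightarrow> 'a) \<Rightarrow> ('a \<Rightarrow> real) \<Rightarrow> real" where
  "dual_norm dh l = (SUP W \<in> UNIV - {0}. \<bar>l W\<bar> / gnorm dh W)"

end

theory Submission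
  imports Defs
begin

text \<open>
  Let E be the non-harmonic part of I_h U(T) - Uhat and test it against W orthogonal to the
  discrete harmonic forms.  L_h does not see harmonic forms in its first argument, so the
  discrete equation replaces L_h(Uhat, W) by (I_h T^N U, W)_h.  Since d_h J = - J d_h, the
  cochain property turns L_h(I_h U(T), W) into the consistency error eps_h(U(T), J W) plus
  (I_h dU/dt(T), W)_h.  Hence L_h(E, W) = eps_h(U(T), J W) - (I_h eps_{dt,N}(U), W)_h, which is
  at most the right-hand side times C_L ||W||_{1,h} because J preserves the graph norm; the
  inf-sup condition then bounds ||E||_{1,h}.
\<close>

lemma oproj_props:
  fixes S :: "'a::euclidean_space set"
  assumes "subspace S"
  shows oproj_in: "oproj S x \<in> S"
    and oproj_orthogonal: "y \<in> S \<Longrightarrow> inner (x - oproj S x) y = 0"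
proof -
  obtain p z where p: "p \<in> span S" and z: "\<And>w. w \<in> span S \<Longrightarrow> orthogonal z w"
    and xpz: "x = p + z"
    using orthogonal_subspace_decomp_exists[of S x] by blast
  have span_S: "span S = S" using assms by (simp add: span_eq_iff)
  have p_props: "p \<in> S \<and> (\<forall>w\<in>S. inner (x - p) w = 0)"
    using p z xpz span_S by (simp add: orthogonal_def)
  have "q = p" if q: "q \<in> S \<and> (\<forall>w\<in>S. inner (x - q) w = 0)" for q
  proof -
    have "q - p \<in> S" using q p_props assms subspace_diff by blast
    then have "inner (x - q) (q - p) = 0" "inner (x - p) (q - p) = 0" using q p_props by auto
    then have "inner (q - p) (q - p) = 0"
      by (simp add: inner_diff_left inner_diff_right algebra_simps)
    then show ?thesis by simp
  qed
  then have "oproj S x = p"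
    unfolding oproj_def using p_props by (rule the_equality[rotated])
  with p_props show "oproj S x \<in> S" "y \<in> S \<Longrightarrow> inner (x - oproj S x) y = 0" by auto
qed

lemma oproj_residual_in_ocompl:
  fixes S :: "'a::euclidean_space set"
  shows "subspace S \<Longrightarrow> x - oproj S x \<in> ocompl S"
  by (simp add: ocompl_def oproj_orthogonal)

lemma lin_on_subspace: "lin_on S f \<Longrightarrow> subspace S"
  unfolding lin_on_def by blast

lemma lin_on_add: "lin_on S f \<Longrightarrow> x \<in> S \<Longrightarrow> y \<in> S \<Longrightarrow> f (x + y) = f x + f y"
  unfolding lin_on_def by blast

lemma lin_on_0: "lin_on S f \<Longrightarrow> f 0 = 0"
  unfolding lin_on_def by (metis scale_zero_left subspace_0)

lemma lin_on_minus: "lin_on S f \<Longrightarrow> x \<in> S \<Longrightarrow> f (- x) = - f x"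
  unfolding lin_on_def by (metis scaleR_minus1_left)

lemma lin_on_diff:
  assumes "lin_on S f" "x \<in> S" "y \<in> S"
  shows "f (x - y) = f x - f y"
proof -
  have "- y \<in> S" using assms by (simp add: lin_on_subspace subspace_neg)
  then show ?thesis
    using assms lin_on_add[of S f x "- y"] lin_on_minus[of S f y] by simp
qed

lemma Jop_apply [simp]: "Jop (a, b, c, e) = (a, - b, c, - e)"
  by (simp add: Jop_def)

lemma dtot_apply [simp]: "dtot f0 f1 f2 (a, b, c, e) = (0, f0 a, f1 b, f2 c)"
  by (simp add: dtot_def)

lemma diag4_apply [simp]: "diag4 f0 f1 f2 f3 (a, b, c, e) = (f0 a, f1 b, f2 c, f3 e)"
  by (simp add: diag4_def)

lemma lin_on_diag4:
  assumes "lin_on S0 f0" "lin_on S1 f1" "lin_on S2 f2" "lin_on S3 f3"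
  shows "lin_on (S0 \<times> S1 \<times> S2 \<times> S3) (diag4 f0 f1 f2 f3)"
  using assms unfolding lin_on_def diag4_def by (auto simp: subspace_Times)

lemma Jop_0 [simp]: "Jop 0 = 0"
  by (simp add: Jop_def zero_prod_def)

lemma Jop_add: "Jop (x + y) = Jop x + Jop y"
  by (cases x; cases y) simp

lemma Jop_diff: "Jop (x - y) = Jop x - Jop y"
  by (cases x; cases y) simp

lemma Jop_eq_0_iff [simp]: "Jop x = 0 \<longleftrightarrow> x = 0"
  by (cases x) (auto simp: zero_prod_def)

lemma inner_Jop_left: "inner (Jop x) y = inner x (Jop y)"
  by (cases x; cases y) simp

lemma norm_Jop [simp]: "norm (Jop x) = norm x"
  by (cases x) (simp add: norm_Pair)

lemma Jop_mem_Times: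
  assumes "subspace S1" "subspace S3" "x \<in> S0 \<times> S1 \<times> S2 \<times> S3"
  shows "Jop x \<in> S0 \<times> S1 \<times> S2 \<times> S3"
  using assms by (cases x) (auto simp: subspace_neg)

lemma diag4_Jop:
  assumes "lin_on S1 f1" "lin_on S3 f3" "x \<in> S0 \<times> S1 \<times> S2 \<times> S3"
  shows "diag4 f0 f1 f2 f3 (Jop x) = Jop (diag4 f0 f1 f2 f3 x)"
  using assms by (cases x) (simp add: lin_on_minus)

lemma linear_dtot:
  assumes "linear f0" "linear f1" "linear f2"
  shows "linear (dtot f0 f1 f2)"
  using assms unfolding dtot_def
  by (intro linearI) (auto simp: linear_add linear_scale split: prod.splits)

lemma dtot_Jop:
  assumes "linear f0" "linear f1" "linear f2"
  shows "dtot f0 f1 f2 (Jop x) = - Jop (dtot f0 f1 f2 x)"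
  using assms by (cases x) (simp add: linear_neg)

lemma dtot_diag4_cochain:
  assumes "lin_on Dom0 I0"
    and "\<forall>u\<in>Dom0 \<inter> D0. d0 u \<in> Dom1 \<and> dh0 (I0 u) = I1 (d0 u)"
    and "\<forall>u\<in>Dom1 \<inter> D1. d1 u \<in> Dom2 \<and> dh1 (I1 u) = I2 (d1 u)"
    and "\<forall>u\<in>Dom2 \<inter> D2. d2 u \<in> Dom3 \<and> dh2 (I2 u) = I3 (d2 u)"
    and "u \<in> D0 \<times> D1 \<times> D2 \<times> UNIV" "u \<in> Dom0 \<times> Dom1 \<times> Dom2 \<times> Dom3"
  shows "dtot d0 d1 d2 u \<in> Dom0 \<times> Dom1 \<times> Dom2 \<times> Dom3"
    and "dtot dh0 dh1 dh2 (diag4 I0 I1 I2 I3 u) = diag4 I0 I1 I2 I3 (dtot d0 d1 d2 u)"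
  using assms
  by (cases u; auto simp: lin_on_0 lin_on_subspace subspace_0)+

lemma Lh_diff_left:
  assumes "linear dh"
  shows "Lh dh (X - Y) W = Lh dh X W - Lh dh Y W"
  by (simp add: Lh_def linear_diff[OF assms] Jop_diff inner_diff_left inner_diff_right)

lemma Lh_dtot:
  assumes "linear f0" "linear f1" "linear f2"
  shows "Lh (dtot f0 f1 f2) X W = inner (Jop (dtot f0 f1 f2 X)) W + inner X (dtot f0 f1 f2 (Jop W))"
  by (simp add: Lh_def dtot_Jop[OF assms])

lemma subspace_harmonic:
  fixes f :: "'a::euclidean_space \<Rightarrow> 'a"
  assumes "linear f"
  shows "subspace {V. f V = 0 \<and> adjoint f V = 0}"
  using assms adjoint_linear[OF assms]
  by (auto simp: subspace_def linear_add linear_scale linear_0)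

lemma Lh_harmonic_left:
  fixes f0 :: "'a::euclidean_space \<Rightarrow> 'b::euclidean_space"
    and f1 :: "'b \<Rightarrow> 'c::euclidean_space" and f2 :: "'c \<Rightarrow> 'e::euclidean_space"
  assumes "linear f0" "linear f1" "linear f2"
    and "dtot f0 f1 f2 Z = 0" "adjoint (dtot f0 f1 f2) Z = 0"
  shows "Lh (dtot f0 f1 f2) Z W = 0"
proof -
  have "inner Z (dtot f0 f1 f2 (Jop W)) = inner (adjoint (dtot f0 f1 f2) Z) (Jop W)"
    using adjoint_works[OF linear_dtot[OF assms(1-3)]] by (simp add: inner_commute)
  then show ?thesis using assms by (simp add: Lh_dtot)
qed

lemma Lh_interpolant:
  fixes d0 :: "'x0::real_vector \<Rightarrow> 'x1::real_vector"
    and d1 :: "'x1 \<Rightarrow> 'x2::real_vector" and d2 :: "'x2 \<Rightarrow> 'x3::real_vector"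
    and dh0 :: "'h0::real_inner \<Rightarrow> 'h1::real_inner"
    and dh1 :: "'h1 \<Rightarrow> 'h2::real_inner" and dh2 :: "'h2 \<Rightarrow> 'h3::real_inner"
    and I0 :: "'x0 \<Rightarrow> 'h0" and I1 :: "'x1 \<Rightarrow> 'h1" and I2 :: "'x2 \<Rightarrow> 'h2" and I3 :: "'x3 \<Rightarrow> 'h3"
    and Dom0 :: "'x0 set" and Dom1 :: "'x1 set" and Dom2 :: "'x2 set" and Dom3 :: "'x3 set"
  defines "Ih \<equiv> diag4 I0 I1 I2 I3" and "dh \<equiv> dtot dh0 dh1 dh2"
    and "Domh \<equiv> Dom0 \<times> Dom1 \<times> Dom2 \<times> Dom3"
  assumes lin_dh: "linear dh0" "linear dh1" "linear dh2"
    and lin_I: "lin_on Dom0 I0" "lin_on Dom1 I1" "lin_on Dom2 I2" "lin_on Dom3 I3"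
    and cochain0: "\<forall>u\<in>Dom0 \<inter> D0. d0 u \<in> Dom1 \<and> dh0 (I0 u) = I1 (d0 u)"
    and cochain1: "\<forall>u\<in>Dom1 \<inter> D1. d1 u \<in> Dom2 \<and> dh1 (I1 u) = I2 (d1 u)"
    and cochain2: "\<forall>u\<in>Dom2 \<inter> D2. d2 u \<in> Dom3 \<and> dh2 (I2 u) = I3 (d2 u)"
    and u: "u \<in> D0 \<times> D1 \<times> D2 \<times> UNIV" "u \<in> Domh" and s: "s \<in> Domh"
  shows "Lh dh (Ih u) W
         = (inner (Ih u) (dh (Jop W)) - inner (Ih s) (Jop W)) + inner (Ih (Jop (dtot d0 d1 d2 u + s))) W"
proof -
  let ?du = "dtot d0 d1 d2 u"
  have sub: "subspace Dom1" "subspace Dom3" using lin_I by (simp_all add: lin_on_subspace)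
  have du: "?du \<in> Domh" and comm: "dh (Ih u) = Ih ?du"
    unfolding Ih_def dh_def Domh_def
    by (rule dtot_diag4_cochain[OF lin_I(1) cochain0 cochain1 cochain2 u[unfolded Domh_def]])+
  have J_du: "Jop ?du \<in> Domh" and J_s: "Jop s \<in> Domh"
    using Jop_mem_Times[OF sub du[unfolded Domh_def]] Jop_mem_Times[OF sub s[unfolded Domh_def]]
    unfolding Domh_def .
  have "Lh dh (Ih u) W = inner (Jop (Ih ?du)) W + inner (Ih u) (dh (Jop W))"
    unfolding dh_def using lin_dh by (simp add: Lh_dtot comm[unfolded dh_def])
  also have "Jop (Ih ?du) = Ih (Jop ?du)"
    unfolding Ih_def by (rule diag4_Jop[OF lin_I(2,4) du[unfolded Domh_def], symmetric])
  also have "inner (Ih s) (Jop W) = inner (Ih (Jop s)) W"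
    unfolding Ih_def inner_Jop_left[symmetric] diag4_Jop[OF lin_I(2,4) s[unfolded Domh_def]] ..
  moreover have "Ih (Jop (?du + s)) = Ih (Jop ?du) + Ih (Jop s)"
    using lin_on_add[OF lin_on_diag4[OF lin_I] J_du[unfolded Domh_def] J_s[unfolded Domh_def]]
    unfolding Ih_def by (simp add: Jop_add)
  ultimately show ?thesis by (simp add: inner_add_left)
qed

lemma gnorm_pos: "x \<noteq> 0 \<Longrightarrow> 0 < gnorm dh x"
  by (simp add: gnorm_def add_pos_nonneg)

lemma gnorm_Jop:
  assumes "linear f0" "linear f1" "linear f2"
  shows "gnorm (dtot f0 f1 f2) (Jop x) = gnorm (dtot f0 f1 f2) x"
  by (simp add: gnorm_def dtot_Jop[OF assms])

lemma abs_inner_functional_le_gnorm: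
  "\<bar>inner a (dh W) - inner b W\<bar> \<le> (norm a + norm b) * gnorm dh W"
proof -
  have "\<bar>inner a (dh W) - inner b W\<bar> \<le> norm a * norm (dh W) + norm b * norm W"
    by (smt (verit) Cauchy_Schwarz_ineq2)
  also have "\<dots> \<le> (norm a + norm b) * gnorm dh W"
    by (simp add: gnorm_def algebra_simps add_mono mult_left_mono)
  finally show ?thesis .
qed

lemma abs_le_dual_norm:
  assumes bounded: "\<And>W. \<bar>l W\<bar> \<le> C * gnorm dh W" and "W \<noteq> 0"
  shows "\<bar>l W\<bar> \<le> dual_norm dh l * gnorm dh W"
proof -
  have "\<bar>l V\<bar> / gnorm dh V \<le> C" if "V \<noteq> 0" for V
    using bounded[of V] gnorm_pos[OF that] by (simp add: pos_divide_le_eq)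
  then have "bdd_above ((\<lambda>W. \<bar>l W\<bar> / gnorm dh W) ` (UNIV - {0}))"
    by (intro bdd_aboveI2[where M = C]) auto
  then have "\<bar>l W\<bar> / gnorm dh W \<le> dual_norm dh l"
    unfolding dual_norm_def using \<open>W \<noteq> 0\<close> by (intro cSUP_upper) auto
  then show ?thesis using gnorm_pos[OF \<open>W \<noteq> 0\<close>] by (simp add: divide_le_eq mult.commute)
qed

lemma dual_norm_nonneg:
  fixes l :: "'a::euclidean_space \<Rightarrow> real"
  assumes "\<And>W. \<bar>l W\<bar> \<le> C * gnorm dh W"
  shows "0 \<le> dual_norm dh l"
proof -
  obtain V :: 'a where "V \<noteq> 0"
    using nonzero_Basis nonempty_Basis by blast
  then show ?thesis
    using abs_le_dual_norm[OF assms] gnorm_pos[OF \<open>V \<noteq> 0\<close>] by (smt (verit) zero_le_mult_iff)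
qed

lemma abs_Jop_functional_le:
  assumes lin: "linear f0" "linear f1" "linear f2"
    and bounded: "\<And>W. \<bar>l W\<bar> \<le> C * gnorm (dtot f0 f1 f2) W"
  shows "\<bar>l (Jop W) - inner r W\<bar> \<le> (dual_norm (dtot f0 f1 f2) l + norm r) * gnorm (dtot f0 f1 f2) W"
proof -
  let ?g = "gnorm (dtot f0 f1 f2)"
  have "\<bar>l (Jop W)\<bar> \<le> dual_norm (dtot f0 f1 f2) l * ?g W"
  proof (cases "W = 0")
    case True
    then show ?thesis using bounded[of 0] lin by (simp add: gnorm_def linear_0[OF linear_dtot])
  next
    case False
    then show ?thesis using abs_le_dual_norm[OF bounded, of "Jop W"] by (simp add: gnorm_Jop[OF lin])
  qed
  moreover have "\<bar>inner r W\<bar> \<le> norm r * ?g W"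
    using Cauchy_Schwarz_ineq2[of r W] by (smt (verit) gnorm_def mult_left_mono norm_ge_zero)
  ultimately show ?thesis by (simp add: algebra_simps)
qed

lemma gnorm_le_of_inf_sup:
  fixes dh :: "'a::real_normed_vector \<Rightarrow> 'a" and L :: "'a \<Rightarrow> 'a \<Rightarrow> real"
  assumes "linear dh" "0 < CL" "0 \<le> B" "V \<in> K"
    and inf_sup: "\<forall>V\<in>K. (SUP W \<in> K - {0}. L V W / gnorm dh W) \<ge> CL * gnorm dh V"
    and bound: "\<And>W. W \<in> K - {0} \<Longrightarrow> L V W \<le> B * gnorm dh W"
  shows "gnorm dh V \<le> (1 / CL) * B"
proof (cases "V = 0")
  case True
  then show ?thesis using assms(1-3) by (simp add: gnorm_def linear_0)
next
  case False
  with \<open>V \<in> K\<close> have "K - {0} \<noteq> {}" by blast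
  moreover have "L V W / gnorm dh W \<le> B" if "W \<in> K - {0}" for W
    using bound[OF that] gnorm_pos[of W dh] that by (simp add: pos_divide_le_eq)
  ultimately have "(SUP W \<in> K - {0}. L V W / gnorm dh W) \<le> B"
    by (rule cSUP_least)
  with inf_sup \<open>V \<in> K\<close> \<open>0 < CL\<close> show ?thesis by (force simp: field_simps)
qed

lemma Lh_projected_error:
  fixes dh0 :: "'h0::euclidean_space \<Rightarrow> 'h1::euclidean_space"
    and dh1 :: "'h1 \<Rightarrow> 'h2::euclidean_space" and dh2 :: "'h2 \<Rightarrow> 'h3::euclidean_space"
  defines "dh \<equiv> dtot dh0 dh1 dh2"
    and "harmh \<equiv> {V. dtot dh0 dh1 dh2 V = 0 \<and> adjoint (dtot dh0 dh1 dh2) V = 0}"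
  assumes lin_dh: "linear dh0" "linear dh1" "linear dh2"
    and Uhat_eq: "\<forall>V. Lh dh (Uhat - oproj harmh Uhat) V = inner (F - oproj harmh F) V"
    and W: "W \<in> ocompl harmh"
  shows "Lh dh ((X - Uhat) - oproj harmh (X - Uhat)) W = Lh dh X W - inner F W"
proof -
  let ?P = "oproj harmh"
  have harm: "subspace harmh"
    unfolding harmh_def by (rule subspace_harmonic[OF linear_dtot[OF lin_dh]])
  have lin: "linear dh" unfolding dh_def by (rule linear_dtot[OF lin_dh])
  have Lh_harm: "Lh dh Z W = 0" if "Z \<in> harmh" for Z
    using that unfolding dh_def harmh_def by (simp add: Lh_harmonic_left[OF lin_dh])
  have "(X - Uhat) - ?P (X - Uhat) = (X - (Uhat - ?P Uhat)) - (?P (X - Uhat) + ?P Uhat)"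
    by simp
  then have "Lh dh ((X - Uhat) - ?P (X - Uhat)) W
      = Lh dh (X - (Uhat - ?P Uhat)) W - Lh dh (?P (X - Uhat) + ?P Uhat) W"
    by (simp only: Lh_diff_left[OF lin])
  also have "\<dots> = Lh dh X W - Lh dh (Uhat - ?P Uhat) W"
    using Lh_harm[OF subspace_add[OF harm oproj_in[OF harm] oproj_in[OF harm]]]
    by (simp only: Lh_diff_left[OF lin] diff_zero)
  also have "Lh dh (Uhat - ?P Uhat) W = inner F W"
  proof -
    have "inner W (?P F) = 0"
      using W oproj_in[OF harm, of F] unfolding ocompl_def by blast
    then have "inner (?P F) W = 0" by (simp add: inner_commute)
    then show ?thesis using Uhat_eq[rule_format, of W] by (simp add: inner_diff_left)
  qed
  finally show ?thesis .
qed

lemma Lh_projected_error_le: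
  fixes dh0 :: "'h0::euclidean_space \<Rightarrow> 'h1::euclidean_space"
    and dh1 :: "'h1 \<Rightarrow> 'h2::euclidean_space" and dh2 :: "'h2 \<Rightarrow> 'h3::euclidean_space"
  defines "dh \<equiv> dtot dh0 dh1 dh2"
    and "harmh \<equiv> {V. dtot dh0 dh1 dh2 V = 0 \<and> adjoint (dtot dh0 dh1 dh2) V = 0}"
  assumes lin_dh: "linear dh0" "linear dh1" "linear dh2"
    and Uhat_eq: "\<forall>V. Lh dh (Uhat - oproj harmh Uhat) V = inner (F - oproj harmh F) V"
    and consistency: "\<And>W. Lh dh X W = l (Jop W) + inner G W"
    and bounded: "\<And>W. \<bar>l W\<bar> \<le> C * gnorm dh W"
    and W: "W \<in> ocompl harmh"
  shows "Lh dh ((X - Uhat) - oproj harmh (X - Uhat)) W \<le> (dual_norm dh l + norm (F - G)) * gnorm dh W"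
proof -
  have "Lh dh ((X - Uhat) - oproj harmh (X - Uhat)) W = Lh dh X W - inner F W"
    using Lh_projected_error[OF lin_dh Uhat_eq[unfolded dh_def harmh_def] W[unfolded harmh_def]]
    unfolding dh_def harmh_def .
  also have "\<dots> = l (Jop W) - inner (F - G) W"
    by (simp add: consistency inner_diff_left)
  also have "\<dots> \<le> (dual_norm dh l + norm (F - G)) * gnorm dh W"
    unfolding dh_def
    by (rule abs_le_D1[OF abs_Jop_functional_le[OF lin_dh bounded[unfolded dh_def]]])
  finally show ?thesis .
qed

theorem lemma4p13:
  fixes d0 :: "'x0::{real_inner,complete_space} \<Rightarrow> 'x1::{real_inner,complete_space}"
    and d1 :: "'x1 \<Rightarrow> 'x2::{real_inner,complete_space}"
    and d2 :: "'x2 \<Rightarrow> 'x3::{real_inner,complete_space}"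
    and D0 :: "'x0 set" and D1 :: "'x1 set" and D2 :: "'x2 set"
    and dh0 :: "'h0::euclidean_space \<Rightarrow> 'h1::euclidean_space"
    and dh1 :: "'h1 \<Rightarrow> 'h2::euclidean_space"
    and dh2 :: "'h2 \<Rightarrow> 'h3::euclidean_space"
    and I0 :: "'x0 \<Rightarrow> 'h0" and I1 :: "'x1 \<Rightarrow> 'h1" and I2 :: "'x2 \<Rightarrow> 'h2" and I3 :: "'x3 \<Rightarrow> 'h3"
    and Dom0 :: "'x0 set" and Dom1 :: "'x1 set" and Dom2 :: "'x2 set" and Dom3 :: "'x3 set"
    and U :: "real \<Rightarrow> 'x0 \<times> 'x1 \<times> 'x2 \<times> 'x3"
    and T :: real and N :: nat and t :: "nat \<Rightarrow> real"
    and TN :: "(nat \<Rightarrow> 'x0 \<times> 'x1 \<times> 'x2 \<times> 'x3) \<Rightarrow> 'x0 \<times> 'x1 \<times> 'x2 \<times> 'x3"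
    and Uhat :: "'h0 \<times> 'h1 \<times> 'h2 \<times> 'h3"
    and CL :: real
  defines "d \<equiv> dtot d0 d1 d2"
      and "DD \<equiv> D0 \<times> D1 \<times> D2 \<times> (UNIV :: 'x3 set)"
      and "dstar \<equiv> adj (D0 \<times> D1 \<times> D2 \<times> (UNIV :: 'x3 set)) (dtot d0 d1 d2)"
      and "harmC \<equiv> {u \<in> D0 \<times> D1 \<times> D2 \<times> (UNIV :: 'x3 set).
                      u \<in> adj_dom (D0 \<times> D1 \<times> D2 \<times> (UNIV :: 'x3 set)) (dtot d0 d1 d2)
                      \<and> dtot d0 d1 d2 u = 0
                      \<and> adj (D0 \<times> D1 \<times> D2 \<times> (UNIV :: 'x3 set)) (dtot d0 d1 d2) u = 0}"
      and "dh \<equiv> dtot dh0 dh1 dh2"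
      and "harmh \<equiv> {V. dtot dh0 dh1 dh2 V = 0 \<and> adjoint (dtot dh0 dh1 dh2) V = 0}"
      and "Ih \<equiv> diag4 I0 I1 I2 I3"
      and "Domh \<equiv> Dom0 \<times> Dom1 \<times> Dom2 \<times> Dom3"
      and "dtU \<equiv> (\<lambda>s. vector_derivative U (at s within {0..T}))"
      and "TNU \<equiv> TN (\<lambda>m. U (t m))"
  \<comment> \<open>continuous Hilbert complex (natural domains, densely defined, closed, d o d = 0)\<close>
  assumes lin_d0: "lin_on D0 d0" and lin_d1: "lin_on D1 d1" and lin_d2: "lin_on D2 d2"
    and dense_D0: "closure D0 = UNIV" and dense_D1: "closure D1 = UNIV" and dense_D2: "closure D2 = UNIV"
    and closed_d0: "closed_op D0 d0" and closed_d1: "closed_op D1 d1" and closed_d2: "closed_op D2 d2"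
    and cplx_01: "\<forall>u\<in>D0. d0 u \<in> D1 \<and> d1 (d0 u) = 0"
    and cplx_12: "\<forall>u\<in>D1. d1 u \<in> D2 \<and> d2 (d1 u) = 0"
  \<comment> \<open>discrete complex\<close>
    and lin_dh0: "linear dh0" and lin_dh1: "linear dh1" and lin_dh2: "linear dh2"
    and dh_cplx01: "\<forall>v. dh1 (dh0 v) = 0" and dh_cplx12: "\<forall>v. dh2 (dh1 v) = 0"
  \<comment> \<open>interpolators, linear on their domains, with the cochain property\<close>
    and lin_I0: "lin_on Dom0 I0" and lin_I1: "lin_on Dom1 I1"
    and lin_I2: "lin_on Dom2 I2" and lin_I3: "lin_on Dom3 I3"
    and cochain0: "\<forall>u\<in>Dom0 \<inter> D0. d0 u \<in> Dom1 \<and> dh0 (I0 u) = I1 (d0 u)"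
    and cochain1: "\<forall>u\<in>Dom1 \<inter> D1. d1 u \<in> Dom2 \<and> dh1 (I1 u) = I2 (d1 u)"
    and cochain2: "\<forall>u\<in>Dom2 \<inter> D2. d2 u \<in> Dom3 \<and> dh2 (I2 u) = I3 (d2 u)"
  \<comment> \<open>time grid and the linear map T^N on sequences indexed by 0..N\<close>
    and T_pos: "0 < T" and t0: "t 0 = 0" and t_mono: "\<forall>m<N. t m < t (Suc m)" and tN: "t N = T"
    and TN_add: "\<forall>v w. TN (\<lambda>m. v m + w m) = TN v + TN w"
    and TN_scale: "\<forall>c v. TN (\<lambda>m. c *\<^sub>R v m) = c *\<^sub>R TN v"
    and TN_loc: "\<forall>v w. (\<forall>m\<le>N. v m = w m) \<longrightarrow> TN v = TN w"
  \<comment> \<open>U in C^1([0,T];X) solving the continuous problem\<close>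
    and U_diff: "\<forall>s\<in>{0..T}. U differentiable (at s within {0..T})"
    and U_C1: "continuous_on {0..T} dtU"
    and U_dom: "\<forall>s\<in>{0..T}. U s \<in> DD \<and> U s \<in> adj_dom DD d"
    and U_eq: "\<forall>s\<in>{0..T}. dtU s = Jop (d (U s) + dstar (U s))"
  \<comment> \<open>all interpolants appearing are defined\<close>
    and def_U: "U T \<in> Domh" and def_dstarU: "dstar (U T) \<in> Domh"
    and def_TNU: "TNU \<in> Domh" and def_eps: "TNU - dtU (t N) \<in> Domh"
    and def_PU: "oproj harmC (U (t N)) \<in> Domh"
  \<comment> \<open>the discrete solution\<close>
    and Uhat_eq: "\<forall>V. Lh dh (Uhat - oproj harmh Uhat) V
                      = inner (Ih TNU - oproj harmh (Ih TNU)) V"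
    and Uhat_harm: "oproj harmh Uhat = Ih (oproj harmC (U (t N)))"
  \<comment> \<open>inf-sup constant\<close>
    and CL_pos: "0 < CL"
    and inf_sup: "\<forall>V\<in>ocompl harmh.
        (SUP W \<in> ocompl harmh - {0}. Lh dh V W / gnorm dh W) \<ge> CL * gnorm dh V"
  shows "gnorm dh ((Ih (U T) - Uhat) - oproj harmh (Ih (U T) - Uhat))
         \<le> (1 / CL) * (dual_norm dh (\<lambda>W. inner (Ih (U T)) (dh W) - inner (Ih (dstar (U T))) W)
                        + norm (Ih (TNU - dtU (t N))))"
proof -
  have dh_def: "dh = dtot dh0 dh1 dh2" and harmh_def: "harmh = {V. dh V = 0 \<and> adjoint dh V = 0}"
    and Ih_def: "Ih = diag4 I0 I1 I2 I3" and Domh_def: "Domh = Dom0 \<times> Dom1 \<times> Dom2 \<times> Dom3"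
    by (simp_all add: \<open>dh \<equiv> _\<close> \<open>harmh \<equiv> _\<close> \<open>Ih \<equiv> _\<close> \<open>Domh \<equiv> _\<close>)
  let ?eps = "\<lambda>W. inner (Ih (U T)) (dh W) - inner (Ih (dstar (U T))) W"
  let ?E = "(Ih (U T) - Uhat) - oproj harmh (Ih (U T) - Uhat)"
  have lin_dh: "linear dh" unfolding dh_def by (rule linear_dtot[OF lin_dh0 lin_dh1 lin_dh2])
  have harm: "subspace harmh"
    unfolding harmh_def dh_def by (rule subspace_harmonic[OF linear_dtot[OF lin_dh0 lin_dh1 lin_dh2]])
  have lin_Ih: "lin_on Domh Ih"
    unfolding Ih_def Domh_def by (rule lin_on_diag4[OF lin_I0 lin_I1 lin_I2 lin_I3])
  have UT: "U T \<in> DD" "dtU (t N) = Jop (d (U T) + dstar (U T))"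
    using U_dom U_eq T_pos tN by auto
  have "dtU (t N) = TNU - (TNU - dtU (t N))" by simp
  then have "dtU (t N) \<in> Domh"
    using def_TNU def_eps lin_on_subspace[OF lin_Ih] by (metis subspace_diff)
  then have residual: "Ih (TNU - dtU (t N)) = Ih TNU - Ih (dtU (t N))"
    by (rule lin_on_diff[OF lin_Ih def_TNU])
  have consistency: "Lh dh (Ih (U T)) W = ?eps (Jop W) + inner (Ih (dtU (t N))) W" for W
    unfolding UT(2) d_def dh_def Ih_def
    by (rule Lh_interpolant[OF lin_dh0 lin_dh1 lin_dh2 lin_I0 lin_I1 lin_I2 lin_I3
          cochain0 cochain1 cochain2 UT(1)[unfolded DD_def] def_U[unfolded Domh_def]
          def_dstarU[unfolded Domh_def]])
  have "Lh dh ?E W \<le> (dual_norm dh ?eps + norm (Ih (TNU - dtU (t N)))) * gnorm dh W"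
    if "W \<in> ocompl harmh - {0}" for W
    using Lh_projected_error_le[OF lin_dh0 lin_dh1 lin_dh2, folded dh_def, folded harmh_def,
        OF Uhat_eq consistency abs_inner_functional_le_gnorm] that
    unfolding residual by blast
  moreover have "0 \<le> dual_norm dh ?eps"
    by (rule dual_norm_nonneg[OF abs_inner_functional_le_gnorm])
  ultimately show ?thesis
    using gnorm_le_of_inf_sup[OF lin_dh CL_pos _ oproj_residual_in_ocompl[OF harm] inf_sup]
    by simp
qed

end
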